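(* For every $n\in\mathbb{N}$, $n\ge1$, and all $\Delta,\Delta'\in\mathcal{P}_n$ with $\Delta\not\equiv\Delta'$: $d_\Delta(i)=d_{\Delta'}(i)$ for every $i\in\mathbb{Z}_n$ if and only if $f^{(\Delta)}_{128,n}=f^{(\Delta')}_{128,n}$.
   Context: Cells are indexed by $\mathbb{Z}_n=\{0,\dots,n-1\}$, indices modulo $n$. Rule $128$ has local rule $r_{128}(x_1,x_2,x_3)=x_1\wedge x_2\wedge x_3$ and global function $f_{128,n}(x)_i=r_{128}(x_{i-1},x_i,x_{i+1})$. An update schedule is an ordered partition $\Delta=(\Delta_1,\dots,\Delta_k)$ of $\mathbb{Z}_n$ into nonempty blocks; $\mathcal{P}_n$ is the set of them. For a block $B$ let $f^{(B)}(x)_i=f_{128,n}(x)_i$ if $i\in B$ and $x_i$ otherwise; $f^{(\Delta)}_{128,n}=f^{(\Delta_k)}\circ\cdots\circ f^{(\Delta_1)}$. (The paper phrases equality of dynamics as equality of transition digraphs with arcs $(x,f^{(\Delta)}_{128,n}(x))$, equivalent to equality of maps.) For $u,v\in\mathbb{Z}_n$ with $u\in\Delta_a$, $v\in\Delta_b$, $lab_\Delta((u,v))=\oplus$ if $b\le a$ and $\ominus$ if $a<b$. Define $d^{\leftarrow}_\Delta(i)=\max\{k\in\mathbb{N}:\forall j,\,0<j<k\Rightarrow lab_\Delta((i-j,i-j+1))=\ominus\}$, $d^{\rightarrow}_\Delta(i)=\max\{k\in\mathbb{N}:\forall j,\,0<j<k\Rightarrow lab_\Delta((i+j,i+j-1))=\ominus\}$,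 and $d_\Delta(i)=\{i-k\bmod n:0\le k\le d^{\leftarrow}_\Delta(i)\}\cup\{i+k\bmod n:0\le k\le d^{\rightarrow}_\Delta(i)\}$. $\Delta\equiv\Delta'$ iff $lab_\Delta$ and $lab_{\Delta'}$ agree on every arc $(i,i+1)$ and $(i+1,i)$, $i\in\mathbb{Z}_n$. *)

theory Defs
  imports Main
begin

text \<open>Cells are integers 0..n-1 (indices taken modulo n); configurations are maps int => bool
  (only the values on cells 0..n-1 matter).\<close>

definition r128 :: "bool \<Rightarrow> bool \<Rightarrow> bool \<Rightarrow> bool" where
  "r128 x1 x2 x3 = (x1 \<and> x2 \<and> x3)"

definition f128 :: "int \<Rightarrow> (int \<Rightarrow> bool) \<Rightarrow> int \<Rightarrow> bool" where
  "f128 n x i = r128 (x ((i - 1) mod n)) (x (i mod n)) (x ((i + 1) mod n))"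

definition is_schedule :: "int \<Rightarrow> int set list \<Rightarrow> bool" where
  "is_schedule n D \<longleftrightarrow>
     (\<forall>B\<in>set D. B \<noteq> {}) \<and>
     (\<forall>a b. a < length D \<and> b < length D \<and> a \<noteq> b \<longrightarrow> D ! a \<inter> D ! b = {}) \<and>
     \<Union>(set D) = {0..<n}"

definition block_update :: "int \<Rightarrow> int set \<Rightarrow> (int \<Rightarrow> bool) \<Rightarrow> int \<Rightarrow> bool" where
  "block_update n B x i = (if i \<in> B then f128 n x i else x i)"

definition sched_map :: "int \<Rightarrow> int set list \<Rightarrow> (int \<Rightarrow> bool) \<Rightarrow> int \<Rightarrow> bool" where
  "sched_map n D = fold (\<lambda>B F. block_update n B \<circ> F) D id"

definition blk :: "int set list \<Rightarrow> int \<Rightarrow> nat" where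
  "blk D u = (THE a. a < length D \<and> u \<in> D ! a)"

datatype label = Oplus | Ominus

definition lab :: "int set list \<Rightarrow> int \<Rightarrow> int \<Rightarrow> label" where
  "lab D u v = (if blk D v \<le> blk D u then Oplus else Ominus)"

definition dleft :: "int \<Rightarrow> int set list \<Rightarrow> int \<Rightarrow> nat" where
  "dleft n D i = (GREATEST k::nat. \<forall>j::nat. 0 < j \<and> j < k \<longrightarrow>
       lab D ((i - int j) mod n) ((i - int j + 1) mod n) = Ominus)"

definition dright :: "int \<Rightarrow> int set list \<Rightarrow> int \<Rightarrow> nat" where
  "dright n D i = (GREATEST k::nat. \<forall>j::nat. 0 < j \<and> j < k \<longrightarrow>
       lab D ((i + int j) mod n) ((i + int j - 1) mod n) = Ominus)"

definition dset :: "int \<Rightarrow> int set list \<Rightarrow> int \<Rightarrow> int set" where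
  "dset n D i = {(i - int k) mod n | k. k \<le> dleft n D i} \<union> {(i + int k) mod n | k. k \<le> dright n D i}"

definition sched_equiv :: "int \<Rightarrow> int set list \<Rightarrow> int set list \<Rightarrow> bool" where
  "sched_equiv n D D' \<longleftrightarrow>
     (\<forall>i\<in>{0..<n}. lab D i ((i + 1) mod n) = lab D' i ((i + 1) mod n) \<and>
                  lab D ((i + 1) mod n) i = lab D' ((i + 1) mod n) i)"

end

theory Submission
  imports Defs
begin

text \<open>Rule 128 is the conjunction of the three cells of a neighbourhood, so after a
  block-sequential update every cell holds the conjunction of the initial configuration over
  some set of cells. When cell \<open>i\<close> is updated, its neighbour \<open>i + s\<close> (\<open>s = \<plusminus>1\<close>) contributes
  its already updated value exactly when its block comes earlier, i.e. when the arc between them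
  is labelled \<open>\<ominus>\<close>. Unfolding this by induction on the block index of \<open>i\<close>, the final value
  of \<open>i\<close> is the conjunction over \<open>d\<^sub>\<Delta>(i)\<close>, the cells reached from \<open>i\<close> along maximal
  \<open>\<ominus>\<close>-runs on both sides. Hence equal sets \<open>d\<^sub>\<Delta>(i)\<close> give equal maps, and conversely
  the configuration that is false only at \<open>j\<close> detects whether \<open>j \<in> d\<^sub>\<Delta>(i)\<close>.\<close>

definition ray :: "int \<Rightarrow> int \<Rightarrow> int \<Rightarrow> nat \<Rightarrow> int set" where
  "ray n s i m = (\<lambda>k. (i + s * int k) mod n) ` {..m}"

lemma ray_0 [simp]: "ray n s i 0 = {i mod n}"
  by (simp add: ray_def)

lemma mod_add_mod_mult_Suc: "((i + s) mod n + s * int k) mod n = (i + s * int (Suc k)) mod n"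
  for i s n :: int
  using mod_add_left_eq [of "i + s" n "s * int k"] by (simp add: algebra_simps)

lemma ray_Suc: "ray n s i (Suc m) = insert (i mod n) (ray n s ((i + s) mod n) m)"
  by (simp add: ray_def atMost_Suc_eq_insert_0 image_image mod_add_mod_mult_Suc)

lemma mem_ray_self: "i mod n \<in> ray n s i m"
  by (auto simp: ray_def intro: image_eqI[of _ _ 0])

lemma ball_less_Suc_split:
  "(\<forall>j. 0 < j \<and> j < Suc k \<longrightarrow> P j) \<longleftrightarrow> (0 < k \<longrightarrow> P 1) \<and> (\<forall>j. 0 < j \<and> j < k \<longrightarrow> P (Suc j))"
  by (auto simp: less_Suc_eq_0_disj) (metis gr0I)

definition decreasing_run :: "int \<Rightarrow> int set list \<Rightarrow> int \<Rightarrow> int \<Rightarrow> nat \<Rightarrow> bool" where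
  "decreasing_run n D s i k \<longleftrightarrow>
     (\<forall>j. 0 < j \<and> j < k \<longrightarrow> blk D ((i + s * int j) mod n) < blk D ((i + s * int j - s) mod n))"

definition run_length :: "int \<Rightarrow> int set list \<Rightarrow> int \<Rightarrow> int \<Rightarrow> nat" where
  "run_length n D s i = (GREATEST k. decreasing_run n D s i k)"

lemma decreasing_run_0 [simp]: "decreasing_run n D s i 0"
  by (simp add: decreasing_run_def)

lemma decreasing_run_Suc:
  "decreasing_run n D s i (Suc k) \<longleftrightarrow>
     (0 < k \<longrightarrow> blk D ((i + s) mod n) < blk D (i mod n)) \<and> decreasing_run n D s ((i + s) mod n) k"
proof -
  have "((i + s) mod n + s * int j - s) mod n = (i + s * int (Suc j) - s) mod n" for j
    using mod_add_left_eq [of "i + s" n "s * int j - s"] by (simp add: algebra_simps)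
  then show ?thesis
    unfolding decreasing_run_def ball_less_Suc_split by (simp add: mod_add_mod_mult_Suc)
qed

lemma decreasing_run_le: "decreasing_run n D s i k \<Longrightarrow> k \<le> Suc (blk D (i mod n))"
proof (induction k arbitrary: i)
  case (Suc k)
  then show ?case
    using decreasing_run_Suc [of n D s i k] by fastforce
qed simp

lemma decreasing_run_run_length: "decreasing_run n D s i (run_length n D s i)"
  unfolding run_length_def
  by (rule GreatestI_nat [of _ 0 "Suc (blk D (i mod n))"]) (auto dest: decreasing_run_le)

lemma le_run_length: "decreasing_run n D s i k \<Longrightarrow> k \<le> run_length n D s i"
  unfolding run_length_def by (rule Greatest_le_nat) (auto dest: decreasing_run_le)

lemma run_length_step:
  "run_length n D s i =
     (if blk D ((i + s) mod n) < blk D (i mod n) then Suc (run_length n D s ((i + s) mod n)) else 1)"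
proof (cases "blk D ((i + s) mod n) < blk D (i mod n)")
  case True
  then have run_Suc: "decreasing_run n D s i (Suc k) \<longleftrightarrow> decreasing_run n D s ((i + s) mod n) k" for k
    by (simp add: decreasing_run_Suc)
  have "run_length n D s i = Suc (run_length n D s ((i + s) mod n))"
  proof (rule antisym)
    show "run_length n D s i \<le> Suc (run_length n D s ((i + s) mod n))"
      using decreasing_run_run_length [of n D s i] run_Suc le_run_length
      by (cases "run_length n D s i") auto
    show "Suc (run_length n D s ((i + s) mod n)) \<le> run_length n D s i"
      by (rule le_run_length) (simp add: run_Suc decreasing_run_run_length)
  qed
  with True show ?thesis by simp
next
  case False
  then have "\<not> decreasing_run n D s i (Suc (Suc k))" for k
    by (simp add: decreasing_run_Suc)
  then have "run_length n D s i \<noteq> Suc (Suc k)" for k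
    using decreasing_run_run_length [of n D s i] by metis
  from this [of "run_length n D s i - 2"] have "run_length n D s i \<le> 1"
    by simp
  moreover have "1 \<le> run_length n D s i"
    by (rule le_run_length) (simp add: decreasing_run_Suc)
  ultimately show ?thesis using False by simp
qed

lemma lab_eq_Ominus_iff: "lab D u v = Ominus \<longleftrightarrow> blk D u < blk D v"
  by (simp add: lab_def)

lemma dleft_eq_run_length: "dleft n D i = run_length n D (-1) i"
  by (simp add: dleft_def run_length_def decreasing_run_def lab_eq_Ominus_iff)

lemma dright_eq_run_length: "dright n D i = run_length n D 1 i"
  by (simp add: dright_def run_length_def decreasing_run_def lab_eq_Ominus_iff)

lemma dset_eq_rays: "dset n D i = ray n (-1) i (run_length n D (-1) i) \<union> ray n 1 i (run_length n D 1 i)"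
  by (auto simp: dset_def ray_def dleft_eq_run_length dright_eq_run_length)

lemma ray_run_length_step:
  assumes "s \<in> {-1, 1}"
  shows "ray n s i (run_length n D s i) =
    (if blk D ((i + s) mod n) < blk D (i mod n)
     then insert (i mod n) (dset n D ((i + s) mod n))
     else {i mod n, (i + s) mod n})"
proof -
  define p where "p = (i + s) mod n"
  have step_back: "(p - s) mod n = i mod n"
    unfolding p_def using mod_diff_left_eq [of "i + s" n s] by simp
  have p_mod: "p mod n = p"
    by (simp add: p_def)
  have ray_1: "ray n s' j 1 = {j mod n, (j + s') mod n}" for s' j
    by (simp add: ray_Suc)
  show ?thesis
  proof (cases "blk D p < blk D (i mod n)")
    case True
    have "run_length n D (- s) p = 1"
      using True run_length_step [of n D "- s" p] by (simp add: step_back p_mod)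
    then have "dset n D p = {p, i mod n} \<union> ray n s p (run_length n D s p)"
      using assms dset_eq_rays [of n D p] ray_1 [of "- s" p] by (auto simp: step_back p_mod)
    moreover have "ray n s i (run_length n D s i) = insert (i mod n) (ray n s p (run_length n D s p))"
      using True run_length_step [of n D s i] by (simp add: ray_Suc p_def)
    moreover have "p \<in> ray n s p (run_length n D s p)"
      using mem_ray_self [of p n] by (simp add: p_mod)
    ultimately show ?thesis
      using True by (auto simp: p_def)
  next
    case False
    then show ?thesis
      using run_length_step [of n D s i] ray_1 by (simp add: p_def)
  qed
qed

lemma sched_map_Nil [simp]: "sched_map n [] = id"
  by (simp add: sched_map_def)

lemma fold_block_update_comp:
  fixes F :: "(int \<Rightarrow> bool) \<Rightarrow> int \<Rightarrow> bool"
  shows "fold (\<lambda>B F. block_update n B \<circ> F) Bs F = sched_map n Bs \<circ> F"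
proof (induction Bs arbitrary: F)
  case Nil
  then show ?case by simp
next
  case (Cons B Bs)
  have "sched_map n (B # Bs) = fold (\<lambda>B F. block_update n B \<circ> F) Bs (block_update n B)"
    by (simp add: sched_map_def)
  then show ?case
    using Cons.IH [of "block_update n B \<circ> F"] Cons.IH [of "block_update n B"] by (simp add: comp_assoc)
qed

lemma sched_map_append: "sched_map n (Bs @ Cs) = sched_map n Cs \<circ> sched_map n Bs"
proof -
  have "sched_map n (Bs @ Cs) = fold (\<lambda>B F. block_update n B \<circ> F) Cs (sched_map n Bs)"
    by (simp add: sched_map_def)
  then show ?thesis
    by (simp only: fold_block_update_comp)
qed

lemma sched_map_Cons: "sched_map n (B # Bs) = sched_map n Bs \<circ> block_update n B"
  using sched_map_append [of n "[B]" Bs] by (simp add: sched_map_def)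

lemma sched_map_apply_notin: "i \<notin> \<Union>(set Bs) \<Longrightarrow> sched_map n Bs x i = x i"
  by (induction Bs arbitrary: x) (simp_all add: sched_map_Cons block_update_def)

locale schedule =
  fixes n :: int and D :: "int set list"
  assumes n_pos: "1 \<le> n" and is_schedule: "is_schedule n D"
begin

lemma Union_blocks: "\<Union>(set D) = {0..<n}"
  using is_schedule by (simp add: is_schedule_def)

lemma blk_eqI:
  assumes "a < length D" and "u \<in> D ! a"
  shows "blk D u = a"
  unfolding blk_def
proof (rule the_equality)
  show "a < length D \<and> u \<in> D ! a" using assms ..
  show "b = a" if "b < length D \<and> u \<in> D ! b" for b
    using that assms is_schedule by (auto simp: is_schedule_def)
qed

lemma blk_less_length_and_mem:
  assumes "u \<in> {0..<n}"
  shows "blk D u < length D \<and> u \<in> D ! blk D u"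
proof -
  obtain B where "B \<in> set D" "u \<in> B"
    using assms Union_blocks by blast
  then obtain a where "a < length D" "u \<in> D ! a"
    by (auto simp: in_set_conv_nth)
  then show ?thesis by (simp add: blk_eqI)
qed

lemma mem_nth_imp_cell: "a < length D \<Longrightarrow> u \<in> D ! a \<Longrightarrow> u \<in> {0..<n}"
  using Union_blocks nth_mem by blast

lemma mem_Union_take: "u \<in> \<Union>(set (take t D)) \<longleftrightarrow> u \<in> {0..<n} \<and> blk D u < t"
proof
  assume "u \<in> \<Union>(set (take t D))"
  then obtain a where "a < length D" "a < t" "u \<in> D ! a"
    by (auto simp: in_set_conv_nth)
  then show "u \<in> {0..<n} \<and> blk D u < t"
    using mem_nth_imp_cell [of a u] by (simp add: blk_eqI)
next
  assume u: "u \<in> {0..<n} \<and> blk D u < t"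
  then have "D ! blk D u \<in> set (take t D)"
    using blk_less_length_and_mem [of u] by (auto simp: in_set_conv_nth intro!: exI [of _ "blk D u"])
  then show "u \<in> \<Union>(set (take t D))"
    using u blk_less_length_and_mem by blast
qed

lemma mem_Union_drop: "u \<in> \<Union>(set (drop t D)) \<longleftrightarrow> u \<in> {0..<n} \<and> t \<le> blk D u"
proof
  assume "u \<in> \<Union>(set (drop t D))"
  then obtain a where "a < length (drop t D)" "u \<in> drop t D ! a"
    by (auto simp: in_set_conv_nth)
  then have "t + a < length D" "u \<in> D ! (t + a)"
    by simp_all
  then show "u \<in> {0..<n} \<and> t \<le> blk D u"
    using mem_nth_imp_cell [of "t + a" u] by (simp add: blk_eqI)
next
  assume u: "u \<in> {0..<n} \<and> t \<le> blk D u"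
  then have "D ! blk D u \<in> set (drop t D)"
    using blk_less_length_and_mem [of u]
    by (auto simp: in_set_conv_nth intro!: exI [of _ "blk D u - t"])
  then show "u \<in> \<Union>(set (drop t D))"
    using u blk_less_length_and_mem by blast
qed

lemma sched_map_take_apply:
  assumes "u \<in> {0..<n}"
  shows "sched_map n (take t D) x u = (if blk D u < t then sched_map n D x u else x u)"
proof (cases "blk D u < t")
  case True
  have "sched_map n D x u = sched_map n (drop t D) (sched_map n (take t D) x) u"
    using sched_map_append [of n "take t D" "drop t D"] by simp
  moreover have "u \<notin> \<Union>(set (drop t D))"
    using True by (subst mem_Union_drop) simp
  ultimately show ?thesis
    using True by (simp add: sched_map_apply_notin)
next
  case False
  then have "u \<notin> \<Union>(set (take t D))"
    by (subst mem_Union_take) simp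
  then show ?thesis
    using False by (simp add: sched_map_apply_notin)
qed

lemma sched_map_apply_own_block:
  assumes "u \<in> {0..<n}"
  shows "sched_map n D x u = f128 n (sched_map n (take (blk D u) D) x) u"
proof -
  let ?b = "blk D u"
  have "sched_map n D = sched_map n (take ?b D @ D ! ?b # drop (Suc ?b) D)"
    using assms blk_less_length_and_mem by (simp flip: id_take_nth_drop)
  also have "\<dots> = sched_map n (drop (Suc ?b) D) \<circ> block_update n (D ! ?b) \<circ> sched_map n (take ?b D)"
    by (simp add: sched_map_append sched_map_Cons comp_assoc)
  finally have "sched_map n D x u =
      sched_map n (drop (Suc ?b) D) (block_update n (D ! ?b) (sched_map n (take ?b D) x)) u"
    by simp
  moreover have "u \<notin> \<Union>(set (drop (Suc ?b) D))"
    by (subst mem_Union_drop) simp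
  ultimately show ?thesis
    using assms blk_less_length_and_mem by (simp add: sched_map_apply_notin block_update_def)
qed

lemma sched_map_apply_outside: "u \<notin> {0..<n} \<Longrightarrow> sched_map n D x u = x u"
  by (simp add: sched_map_apply_notin Union_blocks)

lemma sched_map_cell_iff_dset:
  assumes "u \<in> {0..<n}"
  shows "sched_map n D x u \<longleftrightarrow> (\<forall>j\<in>dset n D u. x j)"
  using assms
proof (induction "blk D u" arbitrary: u rule: less_induct)
  case less
  let ?y = "sched_map n (take (blk D u) D) x"
  have u_mod: "u mod n = u"
    using less.prems by simp
  have half: "(x u \<and> ?y ((u + s) mod n)) \<longleftrightarrow> (\<forall>j\<in>ray n s u (run_length n D s u). x j)"
    if "s \<in> {-1, 1}" for s
  proof -
    have p: "(u + s) mod n \<in> {0..<n}"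
      using n_pos by simp
    then have "?y ((u + s) mod n) \<longleftrightarrow>
        (if blk D ((u + s) mod n) < blk D u then \<forall>j\<in>dset n D ((u + s) mod n). x j
         else x ((u + s) mod n))"
      using less.hyps by (simp add: sched_map_take_apply)
    then show ?thesis
      using ray_run_length_step [OF that, where n = n and D = D and i = u] by (auto simp: u_mod)
  qed
  have "?y u = x u"
    using sched_map_take_apply [OF less.prems] by simp
  then have "sched_map n D x u \<longleftrightarrow> ?y ((u - 1) mod n) \<and> x u \<and> ?y ((u + 1) mod n)"
    using sched_map_apply_own_block [OF less.prems] by (simp add: f128_def r128_def u_mod)
  then show ?case
    using half [of "-1"] half [of 1] by (auto simp: dset_eq_rays)
qed

lemma sched_map_eq:
  "sched_map n D = (\<lambda>x u. if u \<in> {0..<n} then \<forall>j\<in>dset n D u. x j else x u)"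
  by (intro ext) (simp add: sched_map_cell_iff_dset sched_map_apply_outside)

lemma dset_eq_sched_map:
  assumes "i \<in> {0..<n}"
  shows "dset n D i = {j. \<not> sched_map n D (\<lambda>k. k \<noteq> j) i}"
  using assms by (auto simp: sched_map_cell_iff_dset)

end

theorem mainTheorem17:
  fixes n :: int and D D' :: "int set list"
  assumes "n \<ge> 1"
    and "is_schedule n D" and "is_schedule n D'"
    and "\<not> sched_equiv n D D'"
  shows "(\<forall>i\<in>{0..<n}. dset n D i = dset n D' i) \<longleftrightarrow> sched_map n D = sched_map n D'"
proof -
  \<comment> \<open>The characterisation holds for all pairs of schedules.\<close>
  interpret D: schedule n D using assms by unfold_locales
  interpret D': schedule n D' using assms by unfold_locales
  show ?thesis
  proof
    assume "\<forall>i\<in>{0..<n}. dset n D i = dset n D' i"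
    then show "sched_map n D = sched_map n D'"
      by (simp add: D.sched_map_eq D'.sched_map_eq)
  next
    assume "sched_map n D = sched_map n D'"
    then show "\<forall>i\<in>{0..<n}. dset n D i = dset n D' i"
      by (simp add: D.dset_eq_sched_map D'.dset_eq_sched_map)
  qed
qed

end
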